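(* Let $n,m,k$ be positive integers and consider variables $x_0,\dots,x_n$, $y_0,\dots,y_n$, $z_0,\dots,z_m$, $t_0,\dots,t_m$. Define the $k\times(n+k)$ matrices $f_1,f_2$, the $k\times(m+k)$ matrices $f_3,f_4$, the $(n+k)\times k$ matrices $g_1,g_2$ and the $(m+k)\times k$ matrices $g_3,g_4$ by $(f_1)_{i,j}=y_{n+k+1-i-j}$, $(f_2)_{i,j}=x_{n+k+1-i-j}$ if $0\le n+k+1-i-j\le n$ and $0$ otherwise; $(f_3)_{i,j}=t_{m+k+1-i-j}$, $(f_4)_{i,j}=z_{m+k+1-i-j}$ if $0\le m+k+1-i-j\le m$ and $0$ otherwise; $(g_1)_{r,j}=x_{r-j}$, $(g_2)_{r,j}=y_{r-j}$ if $0\le r-j\le n$ and $0$ otherwise; $(g_3)_{r,j}=z_{r-j}$, $(g_4)_{r,j}=t_{r-j}$ if $0\le r-j\le m$ and $0$ otherwise. (So, e.g., the last row of $f_1$ is $(y_n,\dots,y_0,0,\dots,0)$, its first row is $(0,\dots,0,y_n,\dots,y_0)$, and the $j$-th column of $g_1$ has $x_0,\dots,x_n$ in rows $j,\dots,j+n$.) Let $f=\begin{bmatrix} f_1 & -f_2 & f_3 & -f_4\end{bmatrix}$ (a $k\times(2n+2m+4k)$ matrix) and $g=\begin{bmatrix} g_1\\ g_2\\ g_3\\ g_4\end{bmatrix}$ (a $(2n+2m+4k)\times k$ matrix). Then (i) $f\cdot g=0$, and (ii) $f$ and $g$ have maximal rank $k$ whenever the variables are evaluated at a point where not all of $x_0,\dots,x_n$,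 $y_0,\dots,y_n$, $z_0,\dots,z_m$, $t_0,\dots,t_m$ vanish (in particular at every point of $\mathbb{P}^n\times\mathbb{P}^n\times\mathbb{P}^m\times\mathbb{P}^m$ with these homogeneous coordinates).
   Context: Here $x_i$, $y_i$ are homogeneous coordinates on the first and second factor $\mathbb{P}^n$, and $z_i$, $t_i$ on the third and fourth factor $\mathbb{P}^m$, of $\mathbb{P}^n\times\mathbb{P}^n\times\mathbb{P}^m\times\mathbb{P}^m$. "Maximal rank" means the rank equals $\min$ of the number of rows and columns, here $k$. *)

theory Defs
  imports "Jordan_Normal_Form.Matrix" "Jordan_Normal_Form.DL_Rank"
begin

text \<open>Matrices are 0-indexed here; the paper's index i (resp. j, r) corresponds to i+1 (resp. j+1, r+1).\<close>

definition band :: "nat \<Rightarrow> (nat \<Rightarrow> 'a::zero) \<Rightarrow> int \<Rightarrow> 'a" where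
  "band d v e = (if 0 \<le> e \<and> e \<le> int d then v (nat e) else 0)"

definition fmat :: "nat \<Rightarrow> nat \<Rightarrow> (nat \<Rightarrow> 'a::zero) \<Rightarrow> 'a mat" where
  "fmat d k v = mat k (d + k)
     (\<lambda>(i, j). band d v (int d + int k + 1 - (int i + 1) - (int j + 1)))"

definition gmat :: "nat \<Rightarrow> nat \<Rightarrow> (nat \<Rightarrow> 'a::zero) \<Rightarrow> 'a mat" where
  "gmat d k v = mat (d + k) k (\<lambda>(r, j). band d v ((int r + 1) - (int j + 1)))"

definition hcat :: "'a::zero mat \<Rightarrow> 'a mat \<Rightarrow> 'a mat" where
  "hcat A B = four_block_mat A B (0\<^sub>m 0 (dim_col A)) (0\<^sub>m 0 (dim_col B))"

definition f_mat :: "nat \<Rightarrow> nat \<Rightarrow> nat \<Rightarrow> (nat \<Rightarrow> 'a::ring_1) \<Rightarrow> (nat \<Rightarrow> 'a) \<Rightarrow>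
    (nat \<Rightarrow> 'a) \<Rightarrow> (nat \<Rightarrow> 'a) \<Rightarrow> 'a mat" where
  "f_mat n m k x y z t =
     hcat (fmat n k y) (hcat (- fmat n k x) (hcat (fmat m k t) (- fmat m k z)))"

definition g_mat :: "nat \<Rightarrow> nat \<Rightarrow> nat \<Rightarrow> (nat \<Rightarrow> 'a::ring_1) \<Rightarrow> (nat \<Rightarrow> 'a) \<Rightarrow>
    (nat \<Rightarrow> 'a) \<Rightarrow> (nat \<Rightarrow> 'a) \<Rightarrow> 'a mat" where
  "g_mat n m k x y z t =
     gmat n k x @\<^sub>r gmat n k y @\<^sub>r gmat m k z @\<^sub>r gmat m k t"

end

(*
  Entry (i, j) of fmat d k v * gmat d k w is the convolution sum of v_a w_b over a + b = d + k - 1 - i - j,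
  i.e. a coefficient of the product of the generating polynomials of v and w; hence it is symmetric
  in v and w, so f_1 g_1 = f_2 g_2 and f_3 g_3 = f_4 g_4, and the signs in f make f g vanish.

  For the ranks, pick a coefficient vector v that is nonzero somewhere. The k rows of g_v starting
  at the least index p with v_p <> 0 form a lower triangular Toeplitz matrix with v_p on the
  diagonal; dually, k suitable columns of f_v, taken in decreasing order, form one with the largest
  nonzero coefficient on the diagonal. Such a nonsingular k x k minor forces rank k.
*)
theory Submission
  imports Defs "Jordan_Normal_Form.DL_Rank_Submatrix"
begin

lemma dim_fmat [simp]: "dim_row (fmat d k v) = k" "dim_col (fmat d k v) = d + k"
  by (simp_all add: fmat_def)

lemma dim_gmat [simp]: "dim_row (gmat d k v) = d + k" "dim_col (gmat d k v) = k"
  by (simp_all add: gmat_def)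

lemma dim_append_rows [simp]:
  "dim_row (A @\<^sub>r B) = dim_row A + dim_row B" "dim_col (A @\<^sub>r B) = dim_col A"
  by (simp_all add: append_rows_def)

lemma fmat_index:
  "i < k \<Longrightarrow> j < d + k \<Longrightarrow> fmat d k v $$ (i, j) = band d v (int d + int k - 1 - int i - int j)"
  by (simp add: fmat_def algebra_simps)

lemma gmat_index: "i < d + k \<Longrightarrow> j < k \<Longrightarrow> gmat d k v $$ (i, j) = band d v (int i - int j)"
  by (simp add: gmat_def)

lemma dim_hcat [simp]:
  "dim_row (hcat A B) = dim_row A" "dim_col (hcat A B) = dim_col A + dim_col B"
  by (simp_all add: hcat_def)

lemma hcat_index:
  "i < dim_row A \<Longrightarrow> j < dim_col A + dim_col B \<Longrightarrow>
    hcat A B $$ (i, j) = (if j < dim_col A then A $$ (i, j) else B $$ (i, j - dim_col A))"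
  by (simp add: hcat_def)

lemma append_rows_index:
  "i < dim_row A + dim_row B \<Longrightarrow> j < dim_col A \<Longrightarrow>
    (A @\<^sub>r B) $$ (i, j) = (if i < dim_row A then A $$ (i, j) else B $$ (i - dim_row A, j))"
  by (simp add: append_rows_def)

lemma sum_reflect_commute:
  fixes f g :: "int \<Rightarrow> 'a::comm_semiring_0"
  shows "(\<Sum>s\<in>{a..b}. f (b - s) * g (s - a)) = (\<Sum>s\<in>{a..b}. g (b - s) * f (s - a))"
  by (rule sum.reindex_bij_witness[of _ "\<lambda>s. a + b - s" "\<lambda>s. a + b - s"]) (auto simp: mult.commute)

lemma fmat_mult_gmat_index:
  assumes "i < k" "j < k"
  shows "(fmat d k v * gmat d k w) $$ (i, j) =
    (\<Sum>s\<in>{int j..int d + int k - 1 - int i}. band d v (int d + int k - 1 - int i - s) * band d w (s - int j))"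
    (is "_ = sum ?h {int j..?c}")
proof -
  have "(fmat d k v * gmat d k w) $$ (i, j) = (\<Sum>r<d + k. ?h (int r))"
    using assms by (simp add: fmat_def gmat_def scalar_prod_def atLeast0LessThan algebra_simps)
  also have "\<dots> = sum ?h (int ` {..<d + k})"
    by (simp add: sum.reindex)
  also have "\<dots> = sum ?h {int j..?c}"
  proof (rule sum.mono_neutral_right)
    show "{int j..?c} \<subseteq> int ` {..<d + k}"
    proof
      fix s assume "s \<in> {int j..?c}"
      then have "s = int (nat s)" "nat s < d + k" by auto
      then show "s \<in> int ` {..<d + k}" by blast
    qed
  qed (auto simp: band_def)
  finally show ?thesis .
qed

lemma fmat_mult_gmat_commute:
  fixes v w :: "nat \<Rightarrow> 'a::comm_semiring_0"
  shows "fmat d k v * gmat d k w = fmat d k w * gmat d k v"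
proof (rule eq_matI)
  fix i j assume "i < dim_row (fmat d k w * gmat d k v)" "j < dim_col (fmat d k w * gmat d k v)"
  then have "i < k" "j < k" by simp_all
  then show "(fmat d k v * gmat d k w) $$ (i, j) = (fmat d k w * gmat d k v) $$ (i, j)"
    by (simp only: fmat_mult_gmat_index) (rule sum_reflect_commute)
qed simp_all

lemma hcat_mult_append_rows:
  assumes "dim_row A = dim_row B" "dim_col A = dim_row C" "dim_col B = dim_row D"
    and "dim_col C = dim_col D"
  shows "hcat A B * (C @\<^sub>r D) = A * C + B * D"
proof -
  have "hcat A B * (C @\<^sub>r D) = four_block_mat A B (0\<^sub>m 0 (dim_col A)) (0\<^sub>m 0 (dim_col B)) *
      four_block_mat C (0\<^sub>m (dim_row C) 0) D (0\<^sub>m (dim_row D) 0)"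
    by (simp add: hcat_def append_rows_def)
  also have "\<dots> = four_block_mat (A * C + B * D)
      (A * 0\<^sub>m (dim_row C) 0 + B * 0\<^sub>m (dim_row D) 0)
      (0\<^sub>m 0 (dim_col A) * C + 0\<^sub>m 0 (dim_col B) * D)
      (0\<^sub>m 0 (dim_col A) * 0\<^sub>m (dim_row C) 0 + 0\<^sub>m 0 (dim_col B) * 0\<^sub>m (dim_row D) 0)"
    by (rule mult_four_block_mat) (use assms in auto)
  also have "\<dots> = A * C + B * D"
    by (rule eq_matI) (use assms in auto)
  finally show ?thesis .
qed

lemma f_mat_mult_g_mat:
  fixes x y z t :: "nat \<Rightarrow> 'a::comm_ring_1"
  shows "f_mat n m k x y z t * g_mat n m k x y z t = 0\<^sub>m k k"
proof -
  have "f_mat n m k x y z t * g_mat n m k x y z t =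
      fmat n k y * gmat n k x + (- fmat n k x * gmat n k y
        + (fmat m k t * gmat m k z + - fmat m k z * gmat m k t))"
    by (simp add: f_mat_def g_mat_def hcat_mult_append_rows)
  also have "\<dots> = 0\<^sub>m k k"
    unfolding fmat_mult_gmat_commute[of n k y x] fmat_mult_gmat_commute[of m k t z]
    by (rule eq_matI) (auto simp: uminus_mult_left_mat)
  finally show ?thesis .
qed

lemma det_lower_triangular_toeplitz:
  fixes w :: "int \<Rightarrow> 'a::comm_ring_1"
  assumes "\<And>e. e < 0 \<Longrightarrow> w e = 0"
  shows "det (mat k k (\<lambda>(i, j). w (int i - int j))) = w 0 ^ k"
proof -
  have "diag_mat (mat k k (\<lambda>(i, j). w (int i - int j))) = replicate k (w 0)"
    by (rule nth_equalityI) (simp_all add: diag_mat_def)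
  moreover have "det (mat k k (\<lambda>(i, j). w (int i - int j))) =
      prod_list (diag_mat (mat k k (\<lambda>(i, j). w (int i - int j))))"
    by (rule det_lower_triangular[of k]) (auto simp: assms)
  ultimately show ?thesis by (simp add: prod_list_replicate)
qed

lemma (in vec_space) rank_le_nr:
  assumes "A \<in> carrier_mat n nc"
  shows "rank A \<le> n"
proof -
  obtain S where S: "maximal S (\<lambda>T. T \<subseteq> set (cols A) \<and> lin_indpt T)"
    using maximal_exists[of "\<lambda>T. T \<subseteq> set (cols A) \<and> lin_indpt T" "card (set (cols A))" "{}"]
    by (meson List.finite_set card_mono empty_iff empty_subsetI finite_lin_indpt2 rev_finite_subset)
  have "S \<subseteq> set (cols A)" "lin_indpt S" using S by (auto simp: maximal_def)
  moreover have "set (cols A) \<subseteq> carrier_vec n" using assms cols_dim by blast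
  ultimately have "card S \<le> dim" using li_le_dim(2)[OF fin_dim] by blast
  then show ?thesis using rank_card_indpt[OF assms S] dim_is_n by simp
qed

lemma (in vec_space) rank_eq_if_det_col_minor:
  assumes A: "A \<in> carrier_mat n nc" and \<gamma>: "\<And>l. l < n \<Longrightarrow> \<gamma> l < nc"
    and minor: "det (mat n n (\<lambda>(i, l). A $$ (i, \<gamma> l))) \<noteq> 0"
  shows "rank A = n"
proof -
  define B where "B = mat n n (\<lambda>(i, l). A $$ (i, \<gamma> l))"
  have B: "B \<in> carrier_mat n n" by (simp add: B_def)
  have rank_B: "rank B = n" using det_rank_iff[OF B] minor by (simp add: B_def)
  then have distinct: "distinct (cols B)" using non_distinct_low_rank[OF B] by force
  have "set (cols B) \<subseteq> set (cols A)"
  proof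
    fix u assume "u \<in> set (cols B)"
    then obtain l where "l < n" "u = col B l" using B by (auto simp: in_set_conv_nth)
    then have "u = col A (\<gamma> l)" "\<gamma> l < dim_col A" using A \<gamma> by (auto simp: B_def)
    then show "u \<in> set (cols A)" by (simp add: cols_def)
  qed
  then have "card (set (cols B)) \<le> rank A"
    using rank_ge_card_indpt[OF A] full_rank_lin_indpt[OF B rank_B distinct] by blast
  then show ?thesis using distinct_card[OF distinct] B rank_le_nr[OF A] by simp
qed

lemma pick_atLeastLessThan: "i < k \<Longrightarrow> pick {a..<a + k} i = a + i"
  by (induction i) (auto intro: Least_equality)

lemma submatrix_rows_atLeastLessThan:
  assumes "a + k \<le> dim_row A"
  shows "submatrix A {a..<a + k} UNIV = mat k (dim_col A) (\<lambda>(i, j). A $$ (a + i, j))"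
proof -
  have "{i. i < dim_row A \<and> i \<in> {a..<a + k}} = {a..<a + k}" using assms by auto
  then show ?thesis
    unfolding submatrix_def by (intro cong_mat) (simp_all add: pick_UNIV pick_atLeastLessThan)
qed

lemma (in vec_space) rank_eq_if_det_row_minor:
  assumes A: "A \<in> carrier_mat n nc" and "a + nc \<le> n"
    and "det (mat nc nc (\<lambda>(i, j). A $$ (a + i, j))) \<noteq> 0"
  shows "rank A = nc"
proof -
  have "card {j. j < nc \<and> j \<in> UNIV} \<le> rank A"
    using rank_gt_minor[OF A, where I = "{a..<a + nc}" and J = UNIV] assms
    by (simp add: submatrix_rows_atLeastLessThan)
  then show ?thesis using rank_le_nc[OF A] by simp
qed

lemma rank_eq_if_fmat_block:
  fixes F :: "'a::field mat" and v :: "nat \<Rightarrow> 'a"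
  assumes F: "F \<in> carrier_mat k N" and off: "off + d + k \<le> N" and "s \<noteq> 0"
    and block: "\<And>i j. i < k \<Longrightarrow> j < d + k \<Longrightarrow> F $$ (i, off + j) = s * fmat d k v $$ (i, j)"
    and "\<exists>i\<le>d. v i \<noteq> 0"
  shows "vec_space.rank k F = k"
proof -
  define q where "q = (GREATEST i. i \<le> d \<and> v i \<noteq> 0)"
  have q: "q \<le> d \<and> v q \<noteq> 0"
    unfolding q_def by (rule GreatestI_ex_nat) (use assms in auto)
  have above_q: "v r = 0" if "q < r" "r \<le> d" for r
    using Greatest_le_nat[of "\<lambda>i. i \<le> d \<and> v i \<noteq> 0" r d] that unfolding q_def by auto
  define w where "w e = s * band d v (int q - e)" for e
  have "mat k k (\<lambda>(i, l). F $$ (i, off + (d + k - 1 - q - l))) = mat k k (\<lambda>(i, l). w (int i - int l))"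
    using q by (auto simp: block fmat_index w_def of_nat_diff algebra_simps intro!: eq_matI)
  moreover have "det (mat k k (\<lambda>(i, l). w (int i - int l))) \<noteq> 0"
    using q \<open>s \<noteq> 0\<close> above_q
    by (subst det_lower_triangular_toeplitz) (auto simp: w_def band_def nat_less_iff)
  ultimately show ?thesis
    using vec_space.rank_eq_if_det_col_minor[OF F, where \<gamma> = "\<lambda>l. off + (d + k - 1 - q - l)"] off q
    by auto
qed

lemma rank_eq_if_gmat_block:
  fixes G :: "'a::field mat" and v :: "nat \<Rightarrow> 'a"
  assumes G: "G \<in> carrier_mat N k" and off: "off + d + k \<le> N"
    and block: "\<And>i j. i < d + k \<Longrightarrow> j < k \<Longrightarrow> G $$ (off + i, j) = gmat d k v $$ (i, j)"
    and "\<exists>i\<le>d. v i \<noteq> 0"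
  shows "vec_space.rank N G = k"
proof -
  define p where "p = (LEAST i. v i \<noteq> 0)"
  have p: "p \<le> d \<and> v p \<noteq> 0"
    using assms LeastI_ex[of "\<lambda>i. v i \<noteq> 0"] Least_le[of "\<lambda>i. v i \<noteq> 0"] unfolding p_def
    by (meson order.trans)
  have below_p: "v r = 0" if "r < p" for r
    using not_less_Least[of r "\<lambda>i. v i \<noteq> 0"] that unfolding p_def by auto
  define w where "w e = band d v (int p + e)" for e
  have "mat k k (\<lambda>(i, j). G $$ (off + p + i, j)) = mat k k (\<lambda>(i, j). w (int i - int j))"
    using p block[of "p + _"] by (auto simp: gmat_index w_def add.assoc algebra_simps intro!: eq_matI)
  moreover have "det (mat k k (\<lambda>(i, j). w (int i - int j))) \<noteq> 0"
    using p below_p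
    by (subst det_lower_triangular_toeplitz) (auto simp: w_def band_def nat_less_iff)
  ultimately show ?thesis
    using vec_space.rank_eq_if_det_row_minor[OF G, where a = "off + p"] off p by auto
qed

(* The offset 0 + _ and the factors 1 give each block the exact shape of the hypothesis of
   rank_eq_if_fmat_block resp. rank_eq_if_gmat_block. *)
lemma f_mat_blocks:
  assumes "i < k"
  shows "j < n + k \<Longrightarrow> f_mat n m k x y z t $$ (i, 0 + j) = 1 * fmat n k y $$ (i, j)"
    and "j < n + k \<Longrightarrow> f_mat n m k x y z t $$ (i, n + k + j) = - 1 * fmat n k x $$ (i, j)"
    and "j < m + k \<Longrightarrow>
      f_mat n m k x y z t $$ (i, n + k + (n + k) + j) = 1 * fmat m k t $$ (i, j)"
    and "j < m + k \<Longrightarrow>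
      f_mat n m k x y z t $$ (i, n + k + (n + k) + (m + k) + j) = - 1 * fmat m k z $$ (i, j)"
  using assms by (simp_all add: f_mat_def hcat_index)

lemma g_mat_blocks:
  assumes "j < k"
  shows "i < n + k \<Longrightarrow> g_mat n m k x y z t $$ (0 + i, j) = gmat n k x $$ (i, j)"
    and "i < n + k \<Longrightarrow> g_mat n m k x y z t $$ (n + k + i, j) = gmat n k y $$ (i, j)"
    and "i < m + k \<Longrightarrow> g_mat n m k x y z t $$ (n + k + (n + k) + i, j) = gmat m k z $$ (i, j)"
    and "i < m + k \<Longrightarrow>
      g_mat n m k x y z t $$ (n + k + (n + k) + (m + k) + i, j) = gmat m k t $$ (i, j)"
  using assms by (simp_all add: g_mat_def append_rows_index)

lemma rank_f_mat:
  fixes a b c d :: "nat \<Rightarrow> 'a::field"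
  assumes "(\<exists>i\<le>n. a i \<noteq> 0) \<or> (\<exists>i\<le>n. b i \<noteq> 0) \<or> (\<exists>i\<le>m. c i \<noteq> 0) \<or> (\<exists>i\<le>m. d i \<noteq> 0)"
  shows "vec_space.rank k (f_mat n m k a b c d) = k"
proof -
  have F: "f_mat n m k a b c d \<in> carrier_mat k (2 * n + 2 * m + 4 * k)"
    unfolding f_mat_def carrier_mat_def by simp
  from assms show ?thesis
  proof (elim disjE)
    show ?thesis if "\<exists>i\<le>n. a i \<noteq> 0"
      by (rule rank_eq_if_fmat_block[OF F _ _ f_mat_blocks(2) that]) simp_all
    show ?thesis if "\<exists>i\<le>n. b i \<noteq> 0"
      by (rule rank_eq_if_fmat_block[OF F _ _ f_mat_blocks(1) that]) simp_all
    show ?thesis if "\<exists>i\<le>m. c i \<noteq> 0"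
      by (rule rank_eq_if_fmat_block[OF F _ _ f_mat_blocks(4) that]) simp_all
    show ?thesis if "\<exists>i\<le>m. d i \<noteq> 0"
      by (rule rank_eq_if_fmat_block[OF F _ _ f_mat_blocks(3) that]) simp_all
  qed
qed

lemma rank_g_mat:
  fixes a b c d :: "nat \<Rightarrow> 'a::field"
  assumes "(\<exists>i\<le>n. a i \<noteq> 0) \<or> (\<exists>i\<le>n. b i \<noteq> 0) \<or> (\<exists>i\<le>m. c i \<noteq> 0) \<or> (\<exists>i\<le>m. d i \<noteq> 0)"
  shows "vec_space.rank (2 * n + 2 * m + 4 * k) (g_mat n m k a b c d) = k"
proof -
  have G: "g_mat n m k a b c d \<in> carrier_mat (2 * n + 2 * m + 4 * k) k"
    unfolding g_mat_def carrier_mat_def by simp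
  from assms show ?thesis
  proof (elim disjE)
    show ?thesis if "\<exists>i\<le>n. a i \<noteq> 0"
      by (rule rank_eq_if_gmat_block[OF G _ g_mat_blocks(1) that]) simp
    show ?thesis if "\<exists>i\<le>n. b i \<noteq> 0"
      by (rule rank_eq_if_gmat_block[OF G _ g_mat_blocks(2) that]) simp
    show ?thesis if "\<exists>i\<le>m. c i \<noteq> 0"
      by (rule rank_eq_if_gmat_block[OF G _ g_mat_blocks(3) that]) simp
    show ?thesis if "\<exists>i\<le>m. d i \<noteq> 0"
      by (rule rank_eq_if_gmat_block[OF G _ g_mat_blocks(4) that]) simp
  qed
qed

theorem lemma4p1:
  fixes n m k :: nat
    and x y z t :: "nat \<Rightarrow> 'a::comm_ring_1"
  assumes "n > 0" and "m > 0" and "k > 0"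
  shows "f_mat n m k x y z t * g_mat n m k x y z t = 0\<^sub>m k k
    \<and> (\<forall>(a :: nat \<Rightarrow> 'b::field) b c d.
          ((\<exists>i\<le>n. a i \<noteq> 0) \<or> (\<exists>i\<le>n. b i \<noteq> 0) \<or> (\<exists>i\<le>m. c i \<noteq> 0) \<or> (\<exists>i\<le>m. d i \<noteq> 0))
          \<longrightarrow> vec_space.rank k (f_mat n m k a b c d) = k
            \<and> vec_space.rank (2 * n + 2 * m + 4 * k) (g_mat n m k a b c d) = k)"
proof (intro conjI allI impI)
  show "f_mat n m k x y z t * g_mat n m k x y z t = 0\<^sub>m k k"
    by (rule f_mat_mult_g_mat)
qed (erule rank_f_mat rank_g_mat)+

end
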